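(* Let $G$ be a topological group, $m\in\mathbb N\cup\{\infty\}$, $\rho\colon G\to\mathrm{Isom}(\mathbf H^m_{\mathbb C})_o$ a representation, and $x\in\mathbf H^m_{\mathbb C}$ a point with total orbit. Let $\alpha(g_1,g_2,g_3)=\mathrm{Cart}(\rho(g_1)x,\rho(g_2)x,\rho(g_3)x)$. If there exists an alternating $G$-invariant $1$-cochain $\omega\colon G^2\to\mathbb R$ with $\partial\omega=\alpha$, then $\rho$ admits a lift to a homomorphism $\tilde\rho\colon G\to U(1,m)$ (i.e. $\tilde\rho(g)$ induces $\rho(g)$ for every $g$).
   Context: $\mathbf H^m_{\mathbb C}$ is the projectivization of the positive vectors of a separable complex Hilbert space with a strongly non-degenerate Hermitian form $B$ of signature $(1,m)$ (linear in the first variable), with $\cosh d([v],[w])=|B(v,w)|/\sqrt{B(v,v)B(w,w)}$; $U(1,m)$ is the group of $B$-unitary maps, and $\mathrm{Isom}(\mathbf H^m_{\mathbb C})_o=PU(1,m)$. A representation is an orbitally continuous homomorphism. A subset of $\mathbf H^m_{\mathbb C}$ is total if no proper closed complex subspace contains lifts of all its points. The Cartan argument is $\mathrm{Cart}(x,y,z)=\arg\big(B(\tilde x,\tilde y)B(\tilde y,\tilde z)B(\tilde z,\tilde x)\big)\in(-\pi/2,\pi/2)$ for any lifts. A $1$-cochain $\omega$ is alternating if $\omega(l,g)=-\omega(g,l)$ and $G$-invariant if $\omega(hg,hl)=\omega(g,l)$; $\partial\omega(g,l,k)=\omega(l,k)-\omega(g,k)+\omega(g,l)$. *)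

theory Defs
  imports "HOL-Analysis.Analysis" "HOL-Library.Extended_Nat" "HOL-Algebra.Group"
begin

text \<open>Standard model of a separable complex Hilbert space with a Hermitian form of
signature (1,m), m in nat or infinity: square-summable sequences indexed by
0..m (all of nat if m = infinity), with
B(v,w) = v_0 conj(w_0) - sum_{i>=1} v_i conj(w_i).\<close>

type_synonym cvec = "nat \<Rightarrow> complex"

definition Vsp :: "enat \<Rightarrow> cvec set" where
  "Vsp m = {v. (\<forall>i. m < enat i \<longrightarrow> v i = 0) \<and> summable (\<lambda>i. (cmod (v i))\<^sup>2)}"

definition Bform :: "cvec \<Rightarrow> cvec \<Rightarrow> complex" where
  "Bform v w = v 0 * cnj (w 0) - (\<Sum>i. v (Suc i) * cnj (w (Suc i)))"

text \<open>The point of the projectivization determined by v: the complex line through v minus 0.\<close>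
definition cline :: "cvec \<Rightarrow> cvec set" where
  "cline v = {(\<lambda>i. c * v i) | c. c \<noteq> 0}"

definition HypSp :: "enat \<Rightarrow> cvec set set" where
  "HypSp m = {cline v | v. v \<in> Vsp m \<and> Re (Bform v v) > 0}"

definition lift :: "cvec set \<Rightarrow> cvec" where
  "lift p = (SOME v. v \<in> p)"

definition hdist :: "cvec set \<Rightarrow> cvec set \<Rightarrow> real" where
  "hdist p q = arcosh (cmod (Bform (lift p) (lift q)) /
      sqrt (Re (Bform (lift p) (lift p)) * Re (Bform (lift q) (lift q))))"

definition Cart :: "cvec set \<Rightarrow> cvec set \<Rightarrow> cvec set \<Rightarrow> real" where
  "Cart x y z = Arg (Bform (lift x) (lift y) * Bform (lift y) (lift z) * Bform (lift z) (lift x))"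

definition Bunitary :: "enat \<Rightarrow> (cvec \<Rightarrow> cvec) \<Rightarrow> bool" where
  "Bunitary m T \<longleftrightarrow> bij_betw T (Vsp m) (Vsp m)
     \<and> (\<forall>v\<in>Vsp m. \<forall>w\<in>Vsp m. \<forall>a b. T (\<lambda>i. a * v i + b * w i) = (\<lambda>i. a * T v i + b * T w i))
     \<and> (\<forall>v\<in>Vsp m. \<forall>w\<in>Vsp m. Bform (T v) (T w) = Bform v w)"

definition induced :: "(cvec \<Rightarrow> cvec) \<Rightarrow> cvec set \<Rightarrow> cvec set" where
  "induced T p = T ` p"

text \<open>PU(1,m) = Isom(H)_o: maps of H induced by B-unitary maps.\<close>
definition PU :: "enat \<Rightarrow> (cvec set \<Rightarrow> cvec set) \<Rightarrow> bool" where
  "PU m f \<longleftrightarrow> (\<exists>T. Bunitary m T \<and> (\<forall>p\<in>HypSp m. f p = induced T p))"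

definition closed_csubspace :: "enat \<Rightarrow> cvec set \<Rightarrow> bool" where
  "closed_csubspace m W \<longleftrightarrow> W \<subseteq> Vsp m \<and> (\<lambda>i. 0) \<in> W
     \<and> (\<forall>v\<in>W. \<forall>w\<in>W. \<forall>a b. (\<lambda>i. a * v i + b * w i) \<in> W)
     \<and> (\<forall>x v. (\<forall>n. x n \<in> W) \<longrightarrow> v \<in> Vsp m
          \<longrightarrow> (\<lambda>n. \<Sum>i. (cmod (x n i - v i))\<^sup>2) \<longlonglongrightarrow> 0 \<longrightarrow> v \<in> W)"

definition total :: "enat \<Rightarrow> cvec set set \<Rightarrow> bool" where
  "total m S \<longleftrightarrow> (\<forall>W. closed_csubspace m W \<and> (\<forall>p\<in>S. \<exists>v\<in>p. v \<in> W) \<longrightarrow> W = Vsp m)"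

definition topological_group :: "('g, 'b) monoid_scheme \<Rightarrow> 'g topology \<Rightarrow> bool" where
  "topological_group G T \<longleftrightarrow> group G \<and> topspace T = carrier G
     \<and> continuous_map (prod_topology T T) T (\<lambda>(x, y). x \<otimes>\<^bsub>G\<^esub> y)
     \<and> continuous_map T T (\<lambda>x. inv\<^bsub>G\<^esub> x)"

definition representation ::
  "('g, 'b) monoid_scheme \<Rightarrow> 'g topology \<Rightarrow> enat \<Rightarrow> ('g \<Rightarrow> cvec set \<Rightarrow> cvec set) \<Rightarrow> bool" where
  "representation G T m \<rho> \<longleftrightarrow>
     (\<forall>g\<in>carrier G. PU m (\<rho> g))
   \<and> (\<forall>g\<in>carrier G. \<forall>h\<in>carrier G. \<forall>p\<in>HypSp m. \<rho> (g \<otimes>\<^bsub>G\<^esub> h) p = \<rho> g (\<rho> h p))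
   \<and> (\<forall>p\<in>HypSp m. \<forall>g\<in>carrier G. \<forall>\<epsilon>>0. \<exists>U. openin T U \<and> g \<in> U
        \<and> (\<forall>h\<in>U. hdist (\<rho> h p) (\<rho> g p) < \<epsilon>))"

end

theory Submission
  imports Defs
begin

text \<open>
  Every \<open>\<rho> g\<close> is induced by a B-unitary map, and two B-unitary maps inducing the same
  isometry differ by a unit scalar: they agree up to a scalar on every positive line, and these
  scalars coincide because B(v, w) \<noteq> 0 for positive v, w (reverse Cauchy--Schwarz).
  Let u lift x. Rescaling the lifts \<open>R g\<close> we can prescribe the phase of B(R g u, R 1 u) to be
  \<open>\<omega> g 1\<close>; the identity \<open>\<partial>\<omega> = Cart\<close> then forces the phase of B(R g u, R l u) to be
  \<open>\<omega> g l\<close> for all g, l. Now R g R h = c(g, h) R (g h) for a U(1)-valued 2-cocycle c.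
  Comparing B(R g u, R l u) with B(R h R g u, R h R l u), G-invariance of \<open>\<omega>\<close> shows that
  c(h, g) does not depend on g, and the cocycle identity then makes c constant; dividing R by
  this constant gives the lift.
\<close>

section \<open>The Hermitian form of signature (1, m)\<close>

definition Vpos :: "enat \<Rightarrow> cvec set" where
  "Vpos m = {v \<in> Vsp m. Re (Bform v v) > 0}"

lemma HypSp_eq_image_Vpos: "HypSp m = cline ` Vpos m"
  unfolding HypSp_def Vpos_def by blast

lemma Vsp_lincomb:
  assumes "v \<in> Vsp m" "w \<in> Vsp m"
  shows "(\<lambda>i. a * v i + b * w i) \<in> Vsp m"
proof -
  have bound: "(cmod (a * v i + b * w i))\<^sup>2 \<le> 2 * (cmod a)\<^sup>2 * (cmod (v i))\<^sup>2 + 2 * (cmod b)\<^sup>2 * (cmod (w i))\<^sup>2"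
    for i
  proof -
    have "cmod (a * v i + b * w i) \<le> cmod a * cmod (v i) + cmod b * cmod (w i)"
      by (metis norm_mult norm_triangle_ineq)
    hence "(cmod (a * v i + b * w i))\<^sup>2 \<le> (cmod a * cmod (v i) + cmod b * cmod (w i))\<^sup>2"
      by (simp add: power_mono)
    also have "\<dots> \<le> 2 * (cmod a * cmod (v i))\<^sup>2 + 2 * (cmod b * cmod (w i))\<^sup>2"
      using sum_squares_ge_zero[of "cmod a * cmod (v i) - cmod b * cmod (w i)" 0]
      by (simp add: power2_eq_square algebra_simps)
    finally show ?thesis by (simp add: power_mult_distrib)
  qed
  have "summable (\<lambda>i. 2 * (cmod a)\<^sup>2 * (cmod (v i))\<^sup>2 + 2 * (cmod b)\<^sup>2 * (cmod (w i))\<^sup>2)"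
    using assms by (intro summable_add summable_mult) (auto simp: Vsp_def)
  hence "summable (\<lambda>i. (cmod (a * v i + b * w i))\<^sup>2)"
    by (rule summable_comparison_test'[where N=0]) (use bound in auto)
  thus ?thesis using assms by (auto simp: Vsp_def)
qed

lemma Vsp_summable_tail: "v \<in> Vsp m \<Longrightarrow> summable (\<lambda>i. (cmod (v (Suc i)))\<^sup>2)"
  unfolding Vsp_def using summable_Suc_iff[of "\<lambda>i. (cmod (v i))\<^sup>2"] by blast

lemma summable_norm_Bform_tail:
  assumes "v \<in> Vsp m" "w \<in> Vsp m"
  shows "summable (\<lambda>i. norm (v (Suc i) * cnj (w (Suc i))))"
proof (rule summable_comparison_test'[where N=0])
  show "summable (\<lambda>i. (cmod (v (Suc i)))\<^sup>2 + (cmod (w (Suc i)))\<^sup>2)"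
    using assms by (intro summable_add Vsp_summable_tail)
  show "norm (norm (v (Suc n) * cnj (w (Suc n)))) \<le> (cmod (v (Suc n)))\<^sup>2 + (cmod (w (Suc n)))\<^sup>2"
    for n
  proof -
    have "2 * (cmod (v (Suc n)) * cmod (w (Suc n))) \<le> (cmod (v (Suc n)))\<^sup>2 + (cmod (w (Suc n)))\<^sup>2"
      using sum_squares_ge_zero[of "cmod (v (Suc n)) - cmod (w (Suc n))" 0]
      by (simp add: power2_eq_square algebra_simps)
    moreover have "0 \<le> cmod (v (Suc n)) * cmod (w (Suc n))" by simp
    moreover have "norm (norm (v (Suc n) * cnj (w (Suc n)))) = cmod (v (Suc n)) * cmod (w (Suc n))"
      by (simp add: norm_mult)
    ultimately show ?thesis by linarith
  qed
qed

lemma summable_Bform_tail: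
  "v \<in> Vsp m \<Longrightarrow> w \<in> Vsp m \<Longrightarrow> summable (\<lambda>i. v (Suc i) * cnj (w (Suc i)))"
  by (rule summable_norm_cancel[OF summable_norm_Bform_tail])

lemma Bform_scale:
  assumes "v \<in> Vsp m" "w \<in> Vsp m"
  shows "Bform (\<lambda>i. a * v i) (\<lambda>i. b * w i) = a * cnj b * Bform v w"
proof -
  have "(\<Sum>i. a * v (Suc i) * cnj (b * w (Suc i))) = (\<Sum>i. (a * cnj b) * (v (Suc i) * cnj (w (Suc i))))"
    by (simp add: algebra_simps)
  also have "\<dots> = a * cnj b * (\<Sum>i. v (Suc i) * cnj (w (Suc i)))"
    by (rule suminf_mult[OF summable_Bform_tail[OF assms]])
  finally show ?thesis unfolding Bform_def by (simp add: algebra_simps)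
qed

lemma Bform_lincomb_left:
  assumes "v \<in> Vsp m" "w \<in> Vsp m" "z \<in> Vsp m"
  shows "Bform (\<lambda>i. a * v i + b * w i) z = a * Bform v z + b * Bform w z"
proof -
  have sv: "summable (\<lambda>i. v (Suc i) * cnj (z (Suc i)))"
    and sw: "summable (\<lambda>i. w (Suc i) * cnj (z (Suc i)))"
    using assms by (auto intro: summable_Bform_tail)
  have "(\<Sum>i. (a * v (Suc i) + b * w (Suc i)) * cnj (z (Suc i)))
     = (\<Sum>i. a * (v (Suc i) * cnj (z (Suc i))) + b * (w (Suc i) * cnj (z (Suc i))))"
    by (simp add: algebra_simps)
  also have "\<dots> = a * (\<Sum>i. v (Suc i) * cnj (z (Suc i))) + b * (\<Sum>i. w (Suc i) * cnj (z (Suc i)))"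
    using sv sw by (simp add: suminf_add[symmetric] summable_mult suminf_mult)
  finally show ?thesis unfolding Bform_def by (simp add: algebra_simps)
qed

lemma Bform_swap:
  assumes "v \<in> Vsp m" "w \<in> Vsp m"
  shows "Bform w v = cnj (Bform v w)"
proof -
  have "(\<lambda>i. w (Suc i) * cnj (v (Suc i))) sums cnj (\<Sum>i. v (Suc i) * cnj (w (Suc i)))"
    using summable_sums[OF summable_Bform_tail[OF assms]] sums_cnj by (fastforce simp: mult.commute)
  thus ?thesis unfolding Bform_def by (simp add: sums_unique[symmetric] mult.commute)
qed

lemma Bform_lincomb_right:
  assumes "v \<in> Vsp m" "w \<in> Vsp m" "z \<in> Vsp m"
  shows "Bform z (\<lambda>i. a * v i + b * w i) = cnj a * Bform z v + cnj b * Bform z w"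
proof -
  have "Bform z (\<lambda>i. a * v i + b * w i) = cnj (a * Bform v z + b * Bform w z)"
    using Bform_swap[OF assms(3) Vsp_lincomb[OF assms(1,2)]] Bform_lincomb_left[OF assms] by simp
  thus ?thesis using Bform_swap[OF assms(1,3)] Bform_swap[OF assms(2,3)] by simp
qed

definition tail_normsq :: "cvec \<Rightarrow> real" where
  "tail_normsq v = (\<Sum>i. (cmod (v (Suc i)))\<^sup>2)"

lemma tail_normsq_nonneg: "v \<in> Vsp m \<Longrightarrow> tail_normsq v \<ge> 0"
  unfolding tail_normsq_def by (intro suminf_nonneg Vsp_summable_tail) auto

lemma Bform_self:
  assumes "v \<in> Vsp m"
  shows "Bform v v = complex_of_real ((cmod (v 0))\<^sup>2 - tail_normsq v)"
proof -
  have "(\<Sum>i. v (Suc i) * cnj (v (Suc i))) = (\<Sum>i. complex_of_real ((cmod (v (Suc i)))\<^sup>2))"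
    by (simp only: complex_norm_square)
  also have "\<dots> = complex_of_real (tail_normsq v)"
    unfolding tail_normsq_def by (rule suminf_of_real[OF Vsp_summable_tail[OF assms], symmetric])
  finally show ?thesis unfolding Bform_def using complex_norm_square[of "v 0"] by simp
qed

lemma norm_Bform_tail_le:
  assumes "v \<in> Vsp m" "w \<in> Vsp m" "t > 0"
  shows "2 * cmod (\<Sum>i. v (Suc i) * cnj (w (Suc i))) \<le> t * tail_normsq v + tail_normsq w / t"
proof -
  have sn: "summable (\<lambda>i. norm (v (Suc i) * cnj (w (Suc i))))"
    by (rule summable_norm_Bform_tail[OF assms(1,2)])
  have sv: "summable (\<lambda>i. t * (cmod (v (Suc i)))\<^sup>2)" and sw: "summable (\<lambda>i. (cmod (w (Suc i)))\<^sup>2 / t)"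
    using assms by (auto intro: summable_mult summable_divide Vsp_summable_tail)
  have amgm: "2 * (x * y) \<le> t * x\<^sup>2 + y\<^sup>2 / t" for x y :: real
  proof -
    have "t * x\<^sup>2 + y\<^sup>2 / t - 2 * (x * y) = (t * x - y)\<^sup>2 / t"
      using assms(3) by (simp add: field_simps power2_eq_square)
    thus ?thesis using assms(3) by (smt (verit) divide_nonneg_pos zero_le_power2)
  qed
  have "2 * cmod (\<Sum>i. v (Suc i) * cnj (w (Suc i))) \<le> (\<Sum>i. 2 * norm (v (Suc i) * cnj (w (Suc i))))"
    using summable_norm[OF sn] suminf_mult[OF sn, of 2] by simp
  also have "\<dots> \<le> (\<Sum>i. t * (cmod (v (Suc i)))\<^sup>2 + (cmod (w (Suc i)))\<^sup>2 / t)"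
  proof (rule suminf_le)
    show "summable (\<lambda>i. 2 * norm (v (Suc i) * cnj (w (Suc i))))" by (rule summable_mult[OF sn])
    show "summable (\<lambda>i. t * (cmod (v (Suc i)))\<^sup>2 + (cmod (w (Suc i)))\<^sup>2 / t)"
      by (rule summable_add[OF sv sw])
  qed (simp add: amgm norm_mult)
  also have "\<dots> = t * tail_normsq v + tail_normsq w / t"
    using sv sw Vsp_summable_tail[OF assms(1)] Vsp_summable_tail[OF assms(2)]
    by (simp add: suminf_add[symmetric] suminf_mult suminf_divide tail_normsq_def)
  finally show ?thesis .
qed

text \<open>Reverse Cauchy--Schwarz: the tail sum is strictly smaller than \<open>|v 0| |w 0|\<close>.\<close>
lemma Bform_Vpos_nonzero:
  assumes "v \<in> Vpos m" "w \<in> Vpos m"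
  shows "Bform v w \<noteq> 0"
proof -
  have vV: "v \<in> Vsp m" and wV: "w \<in> Vsp m" using assms by (auto simp: Vpos_def)
  define a where "a = cmod (v 0)"
  define b where "b = cmod (w 0)"
  have ha: "tail_normsq v < a\<^sup>2" and hb: "tail_normsq w < b\<^sup>2"
    using assms Bform_self[OF vV] Bform_self[OF wV] by (simp_all add: Vpos_def a_def b_def)
  have "a > 0" "b > 0"
    using ha hb tail_normsq_nonneg[OF vV] tail_normsq_nonneg[OF wV]
    by (auto simp: a_def b_def)
  define t where "t = b / a"
  have "t > 0" using \<open>a > 0\<close> \<open>b > 0\<close> by (simp add: t_def)
  have "t * tail_normsq v + tail_normsq w / t < t * a\<^sup>2 + b\<^sup>2 / t"
    using ha hb \<open>t > 0\<close> by (intro add_strict_mono) (simp_all add: divide_strict_right_mono)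
  also have "\<dots> = 2 * (a * b)"
    using \<open>a > 0\<close> \<open>b > 0\<close> by (simp add: t_def field_simps power2_eq_square)
  finally have "cmod (\<Sum>i. v (Suc i) * cnj (w (Suc i))) < a * b"
    using norm_Bform_tail_le[OF vV wV \<open>t > 0\<close>] by linarith
  moreover have "a * b - cmod (\<Sum>i. v (Suc i) * cnj (w (Suc i))) \<le> cmod (Bform v w)"
    using norm_triangle_ineq2[of "v 0 * cnj (w 0)" "\<Sum>i. v (Suc i) * cnj (w (Suc i))"]
    by (simp add: Bform_def a_def b_def norm_mult)
  ultimately show ?thesis by auto
qed

lemma Vpos_Vsp: "v \<in> Vpos m \<Longrightarrow> v \<in> Vsp m"
  by (simp add: Vpos_def)

lemma Vpos_nonzero: "v \<in> Vpos m \<Longrightarrow> v \<noteq> (\<lambda>i. 0)"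
  by (auto simp: Vpos_def Bform_def)

lemma basis_vector_Vpos: "(\<lambda>i. if i = 0 then 1 else 0) \<in> Vpos m"
proof -
  have "summable (\<lambda>i. (cmod (if i = 0 then 1 else 0 :: complex))\<^sup>2)"
    by (rule summable_finite[of "{0}"]) auto
  thus ?thesis by (auto simp: Vpos_def Vsp_def Bform_def zero_enat_def[symmetric])
qed

lemma scale_cancel:
  fixes v :: cvec
  assumes "v \<noteq> (\<lambda>i. 0)" "(\<lambda>i. c * v i) = (\<lambda>i. d * v i)"
  shows "c = d"
proof (rule ccontr)
  assume "c \<noteq> d"
  have "v i = 0" for i
    using fun_cong[OF assms(2), of i] \<open>c \<noteq> d\<close> by simp
  hence "v = (\<lambda>i. 0)" by auto
  with assms(1) show False ..
qed

lemma Bunitary_Vsp: "Bunitary m T \<Longrightarrow> v \<in> Vsp m \<Longrightarrow> T v \<in> Vsp m"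
  unfolding Bunitary_def using bij_betw_apply by metis

lemma Bunitary_Bform:
  "Bunitary m T \<Longrightarrow> v \<in> Vsp m \<Longrightarrow> w \<in> Vsp m \<Longrightarrow> Bform (T v) (T w) = Bform v w"
  unfolding Bunitary_def by blast

lemma Bunitary_lincomb:
  "Bunitary m T \<Longrightarrow> v \<in> Vsp m \<Longrightarrow> w \<in> Vsp m \<Longrightarrow>
    T (\<lambda>i. a * v i + b * w i) = (\<lambda>i. a * T v i + b * T w i)"
  unfolding Bunitary_def by blast

lemma Bunitary_scale: "Bunitary m T \<Longrightarrow> v \<in> Vsp m \<Longrightarrow> T (\<lambda>i. c * v i) = (\<lambda>i. c * T v i)"
  using Bunitary_lincomb[of m T v v c 0] by simp

lemma Bunitary_Vpos: "Bunitary m T \<Longrightarrow> v \<in> Vpos m \<Longrightarrow> T v \<in> Vpos m"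
  unfolding Vpos_def using Bunitary_Vsp Bunitary_Bform by auto

lemma Bunitary_comp:
  assumes "Bunitary m T" "Bunitary m S"
  shows "Bunitary m (\<lambda>v. T (S v))"
proof -
  have "bij_betw (T \<circ> S) (Vsp m) (Vsp m)"
    using assms bij_betw_trans unfolding Bunitary_def by blast
  thus ?thesis
    using assms Bunitary_Vsp[OF assms(2)] unfolding Bunitary_def by (simp add: comp_def)
qed

lemma Bunitary_unit_multiple:
  assumes "Bunitary m T" "cmod z = 1"
  shows "Bunitary m (\<lambda>v i. z * T v i)"
proof -
  have "z \<noteq> 0" using assms(2) by auto
  have "bij_betw (\<lambda>v i. z * v i) (Vsp m) (Vsp m)"
  proof (rule bij_betwI[where g = "\<lambda>v i. v i / z"])
    show "(\<lambda>v i. z * v i) \<in> Vsp m \<rightarrow> Vsp m" "(\<lambda>v i. v i / z) \<in> Vsp m \<rightarrow> Vsp m"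
      using Vsp_lincomb[of _ m _ z 0] Vsp_lincomb[of _ m _ "1 / z" 0] by auto
  qed (use \<open>z \<noteq> 0\<close> in auto)
  hence "bij_betw ((\<lambda>v i. z * v i) \<circ> T) (Vsp m) (Vsp m)"
    using assms(1) bij_betw_trans unfolding Bunitary_def by blast
  moreover have "Bform (\<lambda>i. z * T v i) (\<lambda>i. z * T w i) = Bform v w" if "v \<in> Vsp m" "w \<in> Vsp m" for v w
    using Bform_scale[OF Bunitary_Vsp[OF assms(1)] Bunitary_Vsp[OF assms(1)], OF that]
      Bunitary_Bform[OF assms(1) that] complex_norm_square[of z] assms(2)
    by simp
  ultimately show ?thesis
    using assms(1) unfolding Bunitary_def by (simp add: comp_def algebra_simps)
qed

lemma cline_self: "v \<in> cline v"
  unfolding cline_def by (rule CollectI, rule exI[of _ 1]) simp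

lemma cline_scale:
  assumes "c \<noteq> 0"
  shows "cline (\<lambda>i. c * v i) = cline v"
proof -
  have "(\<lambda>i. d * v i) = (\<lambda>i. (d / c) * (c * v i))" for d
    using assms by simp
  moreover have "d / c \<noteq> 0" if "d \<noteq> 0" for d
    using assms that by simp
  ultimately show ?thesis
    unfolding cline_def using assms by (fastforce simp: mult.assoc)
qed

lemma lift_cline: "\<exists>a. a \<noteq> 0 \<and> lift (cline v) = (\<lambda>i. a * v i)"
  using someI[of "\<lambda>w. w \<in> cline v", OF cline_self] unfolding lift_def cline_def by blast

lemma cline_eq_image: "cline v = (\<lambda>c i. c * v i) ` (- {0})"
  unfolding cline_def by auto

lemma Bunitary_image_cline: "Bunitary m T \<Longrightarrow> v \<in> Vsp m \<Longrightarrow> T ` cline v = cline (T v)"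
  unfolding cline_eq_image image_image by (simp add: Bunitary_scale)

lemma Bunitary_image_HypSp: "Bunitary m T \<Longrightarrow> p \<in> HypSp m \<Longrightarrow> T ` p \<in> HypSp m"
  unfolding HypSp_eq_image_Vpos by (auto simp: Bunitary_image_cline Vpos_Vsp Bunitary_Vpos)

lemma image_unit_multiple_HypSp:
  assumes "Bunitary m T" "cmod z = 1" "p \<in> HypSp m"
  shows "(\<lambda>v i. z * T v i) ` p = T ` p"
proof -
  obtain v where v: "v \<in> Vsp m" "p = cline v"
    using assms(3) unfolding HypSp_eq_image_Vpos by (auto dest: Vpos_Vsp)
  have "z \<noteq> 0" using assms(2) by auto
  thus ?thesis
    using v Bunitary_image_cline[OF Bunitary_unit_multiple[OF assms(1,2)]]
      Bunitary_image_cline[OF assms(1)] cline_scale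
    by simp
qed

section \<open>Lifts of isometries\<close>

lemma Vpos_shift:
  fixes w u :: cvec
  assumes w: "w \<in> Vsp m" and u: "u \<in> Vpos m"
  obtains t :: real where "(\<lambda>i. w i + complex_of_real t * u i) \<in> Vpos m"
proof -
  have uV: "u \<in> Vsp m" by (rule Vpos_Vsp[OF u])
  define A where "A = Re (Bform u u)"
  define P where "P = Re (Bform w u)"
  define C where "C = Re (Bform w w)"
  have "A > 0" using u by (simp add: Vpos_def A_def)
  have xV: "(\<lambda>i. w i + complex_of_real t * u i) \<in> Vsp m" for t :: real
    using Vsp_lincomb[OF w uV, of 1 "complex_of_real t"] by simp
  have quadratic: "Re (Bform (\<lambda>i. w i + complex_of_real t * u i) (\<lambda>i. w i + complex_of_real t * u i)) = C + 2 * t * P + t\<^sup>2 * A"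
    for t :: real
  proof -
    have "Bform (\<lambda>i. w i + complex_of_real t * u i) (\<lambda>i. w i + complex_of_real t * u i)
        = Bform w w + t * Bform w u + t * Bform u w + t * t * Bform u u"
      using Bform_lincomb_left[OF w uV xV, of 1 "complex_of_real t"] Bform_lincomb_right[OF w uV w, of 1 "complex_of_real t"]
        Bform_lincomb_right[OF w uV uV, of 1 "complex_of_real t"]
      by (simp add: algebra_simps)
    moreover have "Re (Bform u w) = P" using Bform_swap[OF w uV] by (simp add: P_def)
    ultimately show ?thesis by (simp add: A_def C_def P_def power2_eq_square algebra_simps)
  qed
  define t where "t = 1 + (\<bar>C\<bar> + 2 * \<bar>P\<bar>) / A"
  have "t \<ge> 1" using \<open>A > 0\<close> by (simp add: t_def)
  have tA: "t * A = A + \<bar>C\<bar> + 2 * \<bar>P\<bar>" using \<open>A > 0\<close> by (simp add: t_def field_simps)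
  have "t\<^sup>2 * A = t * (t * A)" by (simp add: power2_eq_square)
  also have "\<dots> = t * (A + \<bar>C\<bar> + 2 * \<bar>P\<bar>)" by (simp only: tA)
  also have "\<dots> = t * A + t * \<bar>C\<bar> + 2 * t * \<bar>P\<bar>" by (simp add: algebra_simps)
  finally have "t\<^sup>2 * A = t * A + t * \<bar>C\<bar> + 2 * t * \<bar>P\<bar>" .
  moreover have "t * \<bar>C\<bar> \<ge> \<bar>C\<bar>"
    using mult_right_mono[OF \<open>t \<ge> 1\<close>, of "\<bar>C\<bar>"] by simp
  moreover have "t * P \<ge> - (t * \<bar>P\<bar>)"
    using mult_left_mono[of "- \<bar>P\<bar>" P t] \<open>t \<ge> 1\<close> by simp
  moreover have "t * A > 0" using \<open>t \<ge> 1\<close> \<open>A > 0\<close> by simp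
  ultimately have "C + 2 * t * P + t\<^sup>2 * A > 0" by linarith
  thus ?thesis using that xV quadratic by (simp add: Vpos_def)
qed

lemma induced_eq_imp_proportional:
  assumes "Bunitary m T2" "\<forall>p\<in>HypSp m. T1 ` p = T2 ` p" "v \<in> Vpos m"
  shows "\<exists>c. T1 v = (\<lambda>i. c * T2 v i)"
proof -
  have "T1 v \<in> T1 ` cline v" using cline_self by blast
  also have "\<dots> = cline (T2 v)"
    using assms Bunitary_image_cline[OF assms(1) Vpos_Vsp] unfolding HypSp_eq_image_Vpos by auto
  finally show ?thesis unfolding cline_def by blast
qed

lemma induced_eq_imp_unit_multiple_on_Vpos:
  assumes T1: "Bunitary m T1" and T2: "Bunitary m T2" and same: "\<forall>p\<in>HypSp m. T1 ` p = T2 ` p"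
  obtains l where "cmod l = 1" "\<forall>v\<in>Vpos m. T1 v = (\<lambda>i. l * T2 v i)"
proof -
  define u :: cvec where "u = (\<lambda>i. if i = 0 then 1 else 0)"
  have u: "u \<in> Vpos m" unfolding u_def by (rule basis_vector_Vpos)
  obtain l where l: "T1 u = (\<lambda>i. l * T2 u i)"
    using induced_eq_imp_proportional[OF T2 same u] by blast
  text \<open>Comparing B(u, v) = B(T1 u, T1 v) with B(T2 u, T2 v) forces every constant to be l.\<close>
  have multiplier_eq: "l * cnj c = 1" if v: "v \<in> Vpos m" and c: "T1 v = (\<lambda>i. c * T2 v i)" for v c
  proof -
    have "Bform u v = Bform (T1 u) (T1 v)"
      using Bunitary_Bform[OF T1] u v by (simp add: Vpos_Vsp)
    also have "\<dots> = l * cnj c * Bform (T2 u) (T2 v)"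
      unfolding l c by (rule Bform_scale[OF Bunitary_Vsp[OF T2 Vpos_Vsp[OF u]] Bunitary_Vsp[OF T2 Vpos_Vsp[OF v]]])
    also have "\<dots> = l * cnj c * Bform u v"
      using Bunitary_Bform[OF T2] u v by (simp add: Vpos_Vsp)
    finally show ?thesis using Bform_Vpos_nonzero[OF u v] by simp
  qed
  have "l * cnj l = 1" by (rule multiplier_eq[OF u l])
  hence "(cmod l)\<^sup>2 = 1"
    using complex_norm_square[of l] by (metis of_real_eq_1_iff)
  hence "cmod l = 1"
    using power2_eq_1_iff[of "cmod l"] norm_ge_zero[of l] by linarith
  moreover have "T1 v = (\<lambda>i. l * T2 v i)" if v: "v \<in> Vpos m" for v
  proof -
    obtain c where c: "T1 v = (\<lambda>i. c * T2 v i)"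
      using induced_eq_imp_proportional[OF T2 same v] by blast
    have "l \<noteq> 0" using \<open>l * cnj l = 1\<close> by auto
    have "l * cnj c = l * cnj l" by (simp only: multiplier_eq[OF v c] \<open>l * cnj l = 1\<close>)
    hence "cnj c = cnj l" by (rule mult_left_cancel[OF \<open>l \<noteq> 0\<close>, THEN iffD1])
    hence "c = l" by simp
    thus ?thesis using c by simp
  qed
  ultimately show ?thesis using that by blast
qed

lemma induced_eq_imp_unit_multiple:
  assumes T1: "Bunitary m T1" and T2: "Bunitary m T2" and same: "\<forall>p\<in>HypSp m. T1 ` p = T2 ` p"
  obtains l where "cmod l = 1" "\<forall>w\<in>Vsp m. T1 w = (\<lambda>i. l * T2 w i)"
proof -
  obtain l where l: "cmod l = 1" "\<forall>v\<in>Vpos m. T1 v = (\<lambda>i. l * T2 v i)"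
    using induced_eq_imp_unit_multiple_on_Vpos[OF assms] .
  define u :: cvec where "u = (\<lambda>i. if i = 0 then 1 else 0)"
  have u: "u \<in> Vpos m" "u \<in> Vsp m" unfolding u_def by (auto intro: basis_vector_Vpos Vpos_Vsp)
  text \<open>Every vector differs from a positive one by a multiple of u, and both maps are linear.\<close>
  have "T1 w = (\<lambda>i. l * T2 w i)" if w: "w \<in> Vsp m" for w
  proof -
    obtain t :: real where t: "(\<lambda>i. w i + complex_of_real t * u i) \<in> Vpos m"
      using Vpos_shift[OF w u(1)] .
    have "(\<lambda>i. T1 w i + complex_of_real t * T1 u i) = (\<lambda>i. l * (T2 w i + complex_of_real t * T2 u i))"
      using l(2) t Bunitary_lincomb[OF T1 w u(2), of 1 "complex_of_real t"]
        Bunitary_lincomb[OF T2 w u(2), of 1 "complex_of_real t"]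
      by simp
    thus ?thesis using l(2) u(1) by (simp add: fun_eq_iff algebra_simps)
  qed
  thus ?thesis using that l(1) by blast
qed

section \<open>Normalizing the phases of the lifts\<close>

lemma norm_eq_1_mult_cnj: "cmod z = 1 \<Longrightarrow> z * cnj z = 1"
  using divide_conv_cnj[of z z] by (cases "z = 0") auto

lemma norm_eq_1_sgn: "cmod z = 1 \<Longrightarrow> sgn z = z"
  by (simp add: sgn_eq)

lemma Cart_cline:
  assumes "v1 \<in> Vsp m" "v2 \<in> Vsp m" "v3 \<in> Vsp m"
  shows "Cart (cline v1) (cline v2) (cline v3) = Arg (Bform v1 v2 * Bform v2 v3 * Bform v3 v1)"
proof -
  obtain a1 where a1: "a1 \<noteq> 0" "lift (cline v1) = (\<lambda>i. a1 * v1 i)" using lift_cline by blast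
  obtain a2 where a2: "a2 \<noteq> 0" "lift (cline v2) = (\<lambda>i. a2 * v2 i)" using lift_cline by blast
  obtain a3 where a3: "a3 \<noteq> 0" "lift (cline v3) = (\<lambda>i. a3 * v3 i)" using lift_cline by blast
  let ?B = "Bform v1 v2 * Bform v2 v3 * Bform v3 v1"
  text \<open>Rescaling the lifts multiplies the triple product by the positive number |a1 a2 a3|^2.\<close>
  have "Bform (lift (cline v1)) (lift (cline v2)) * Bform (lift (cline v2)) (lift (cline v3))
      * Bform (lift (cline v3)) (lift (cline v1))
      = (a1 * cnj a2 * Bform v1 v2) * (a2 * cnj a3 * Bform v2 v3) * (a3 * cnj a1 * Bform v3 v1)"
    (is "?lifted = _")
    unfolding a1(2) a2(2) a3(2) using assms by (simp only: Bform_scale)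
  also have "\<dots> = ((a1 * cnj a1) * (a2 * cnj a2) * (a3 * cnj a3)) * ?B"
    by (simp only: ac_simps)
  also have "\<dots> = complex_of_real ((cmod a1)\<^sup>2 * (cmod a2)\<^sup>2 * (cmod a3)\<^sup>2) * ?B"
    by (simp only: of_real_mult complex_norm_square)
  finally have triple: "?lifted = complex_of_real ((cmod a1)\<^sup>2 * (cmod a2)\<^sup>2 * (cmod a3)\<^sup>2) * ?B" .
  have "0 < (cmod a1)\<^sup>2 * (cmod a2)\<^sup>2 * (cmod a3)\<^sup>2" using a1 a2 a3 by simp
  thus ?thesis unfolding Cart_def triple by (rule Arg_times_of_real)
qed

lemma phases_from_base_point:
  fixes F :: "'i \<Rightarrow> 'i \<Rightarrow> complex" and \<omega> :: "'i \<Rightarrow> 'i \<Rightarrow> real"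
  assumes "e \<in> A" "g \<in> A" "l \<in> A"
    and hermitian: "\<forall>g\<in>A. \<forall>l\<in>A. F l g = cnj (F g l)"
    and nonzero: "\<forall>g\<in>A. \<forall>l\<in>A. F g l \<noteq> 0"
    and base: "\<forall>g\<in>A. sgn (F g e) = cis (\<omega> g e)"
    and triangle: "\<forall>g\<in>A. \<forall>l\<in>A. \<forall>k\<in>A. Arg (F g l * F l k * F k g) = \<omega> l k - \<omega> g k + \<omega> g l"
  shows "sgn (F g l) = cis (\<omega> g l)"
proof -
  have "F e g = cnj (F g e)" using hermitian assms(1,2) by blast
  hence "sgn (F e g) = cnj (sgn (F g e))" by (simp add: sgn_eq)
  also have "\<dots> = cis (- \<omega> g e)" using base assms(2) by (simp add: cis_cnj)
  finally have "sgn (F e g) = cis (- \<omega> g e)" .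
  have "Arg (F g l * F l e * F e g) = \<omega> l e - \<omega> g e + \<omega> g l"
    using triangle assms(1-3) by blast
  moreover have "F g l * F l e * F e g \<noteq> 0"
    using nonzero assms(1-3) by simp
  ultimately have "cis (\<omega> l e - \<omega> g e + \<omega> g l) = sgn (F g l * F l e * F e g)"
    by (metis cis_Arg)
  also have "\<dots> = sgn (F g l) * (cis (\<omega> l e) * cis (- \<omega> g e))"
    using base assms(3) \<open>sgn (F e g) = cis (- \<omega> g e)\<close> by (simp add: sgn_mult)
  finally have "sgn (F g l) * (cis (\<omega> l e) * cis (- \<omega> g e)) = cis (\<omega> l e - \<omega> g e + \<omega> g l)" ..
  moreover have "cis (\<omega> l e - \<omega> g e + \<omega> g l) = cis (\<omega> g l) * (cis (\<omega> l e) * cis (- \<omega> g e))"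
    by (simp add: cis_mult algebra_simps)
  ultimately show ?thesis by simp
qed

lemma sgn_Bform_Vpos_self:
  assumes "v \<in> Vpos m"
  shows "sgn (Bform v v) = 1"
proof -
  obtain r where r: "Bform v v = complex_of_real r"
    using Bform_self[OF Vpos_Vsp[OF assms]] by blast
  hence "r > 0" using assms by (simp add: Vpos_def)
  thus ?thesis by (simp add: r sgn_of_real)
qed

lemma PU_lift_with_phase:
  assumes "PU m f" "u \<in> Vpos m" "w \<in> Vpos m" "cmod \<zeta> = 1"
  obtains S where "Bunitary m S" "\<forall>p\<in>HypSp m. S ` p = f p" "sgn (Bform (S u) w) = \<zeta>"
proof -
  obtain T where T: "Bunitary m T" "\<forall>p\<in>HypSp m. f p = T ` p"
    using assms(1) unfolding PU_def induced_def by blast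
  define \<beta> where "\<beta> = Bform (T u) w"
  have "\<beta> \<noteq> 0"
    unfolding \<beta>_def using Bform_Vpos_nonzero Bunitary_Vpos[OF T(1)] assms(2,3) by blast
  define z where "z = \<zeta> * cnj (sgn \<beta>)"
  have "cmod z = 1" using \<open>\<beta> \<noteq> 0\<close> assms(4) by (simp add: z_def norm_mult norm_sgn)
  have "Bform (\<lambda>i. z * T u i) w = z * \<beta>"
    using Bform_scale[OF Bunitary_Vsp[OF T(1) Vpos_Vsp[OF assms(2)]] Vpos_Vsp[OF assms(3)], of z 1]
    by (simp add: \<beta>_def)
  also have "sgn \<dots> = z * sgn \<beta>"
    using \<open>cmod z = 1\<close> by (simp add: sgn_mult norm_eq_1_sgn)
  also have "\<dots> = \<zeta> * (sgn \<beta> * cnj (sgn \<beta>))"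
    by (simp add: z_def ac_simps)
  also have "\<dots> = \<zeta>"
    using norm_eq_1_mult_cnj[of "sgn \<beta>"] \<open>\<beta> \<noteq> 0\<close> by (simp add: norm_sgn)
  finally have "sgn (Bform (\<lambda>i. z * T u i) w) = \<zeta>" .
  with that show ?thesis
    using Bunitary_unit_multiple[OF T(1) \<open>cmod z = 1\<close>] image_unit_multiple_HypSp[OF T(1) \<open>cmod z = 1\<close>] T(2)
    by force
qed

lemma lifts_with_base_phases:
  fixes f :: "'i \<Rightarrow> cvec set \<Rightarrow> cvec set" and \<omega> :: "'i \<Rightarrow> 'i \<Rightarrow> real"
  assumes e: "e \<in> A" and u: "u \<in> Vpos m" and PU: "\<forall>g\<in>A. PU m (f g)" and "\<omega> e e = 0"
  obtains R where "\<forall>g\<in>A. Bunitary m (R g)" "\<forall>g\<in>A. \<forall>p\<in>HypSp m. R g ` p = f g p"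
    "\<forall>g\<in>A. sgn (Bform (R g u) (R e u)) = cis (\<omega> g e)"
proof -
  obtain Te where Te: "Bunitary m Te" "\<forall>p\<in>HypSp m. Te ` p = f e p"
    using PU e unfolding PU_def induced_def by force
  have "Te u \<in> Vpos m" by (rule Bunitary_Vpos[OF Te(1) u])
  have "\<forall>g\<in>A. \<exists>S. Bunitary m S \<and> (\<forall>p\<in>HypSp m. S ` p = f g p) \<and> sgn (Bform (S u) (Te u)) = cis (\<omega> g e)"
  proof
    fix g assume "g \<in> A"
    obtain S where "Bunitary m S" "\<forall>p\<in>HypSp m. S ` p = f g p" "sgn (Bform (S u) (Te u)) = cis (\<omega> g e)"
      by (rule PU_lift_with_phase[OF PU[rule_format, OF \<open>g \<in> A\<close>] u \<open>Te u \<in> Vpos m\<close> norm_cis])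
    thus "\<exists>S. Bunitary m S \<and> (\<forall>p\<in>HypSp m. S ` p = f g p) \<and> sgn (Bform (S u) (Te u)) = cis (\<omega> g e)"
      by blast
  qed
  from bchoice[OF this] obtain S where S: "\<forall>g\<in>A. Bunitary m (S g) \<and> (\<forall>p\<in>HypSp m. S g ` p = f g p)
      \<and> sgn (Bform (S g u) (Te u)) = cis (\<omega> g e)"
    by blast
  text \<open>\<open>R e\<close> is not rescaled, so its phase is \<open>sgn (Bform (Te u) (Te u)) = 1 = cis (\<omega> e e)\<close>.\<close>
  define R where "R = S(e := Te)"
  show ?thesis
  proof (rule that)
    show "\<forall>g\<in>A. Bunitary m (R g)" "\<forall>g\<in>A. \<forall>p\<in>HypSp m. R g ` p = f g p"
      using S Te by (simp_all add: R_def)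
    show "\<forall>g\<in>A. sgn (Bform (R g u) (R e u)) = cis (\<omega> g e)"
      using S sgn_Bform_Vpos_self[OF \<open>Te u \<in> Vpos m\<close>] \<open>\<omega> e e = 0\<close> by (simp add: R_def)
  qed
qed

lemma coboundary_phases:
  fixes f :: "'i \<Rightarrow> cvec set \<Rightarrow> cvec set" and \<omega> :: "'i \<Rightarrow> 'i \<Rightarrow> real"
  assumes e: "e \<in> A" and u: "u \<in> Vpos m"
    and unitary: "\<forall>g\<in>A. Bunitary m (R g)" and induces: "\<forall>g\<in>A. \<forall>p\<in>HypSp m. R g ` p = f g p"
    and base: "\<forall>g\<in>A. sgn (Bform (R g u) (R e u)) = cis (\<omega> g e)"
    and coboundary: "\<forall>g\<in>A. \<forall>l\<in>A. \<forall>k\<in>A.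
      \<omega> l k - \<omega> g k + \<omega> g l = Cart (f g (cline u)) (f l (cline u)) (f k (cline u))"
  shows "\<forall>g\<in>A. \<forall>l\<in>A. sgn (Bform (R g u) (R l u)) = cis (\<omega> g l)"
proof -
  have Vpos: "R g u \<in> Vpos m" if "g \<in> A" for g
    using Bunitary_Vpos unitary u that by blast
  have "cline u \<in> HypSp m" using u by (simp add: HypSp_eq_image_Vpos)
  have orbit: "f g (cline u) = cline (R g u)" if "g \<in> A" for g
  proof -
    have "f g (cline u) = R g ` cline u" using induces that \<open>cline u \<in> HypSp m\<close> by simp
    also have "\<dots> = cline (R g u)"
      by (rule Bunitary_image_cline[OF unitary[rule_format, OF that] Vpos_Vsp[OF u]])
    finally show ?thesis .
  qed
  have triangle: "\<forall>g\<in>A. \<forall>l\<in>A. \<forall>k\<in>A. Arg (Bform (R g u) (R l u) * Bform (R l u) (R k u) * Bform (R k u) (R g u))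
      = \<omega> l k - \<omega> g k + \<omega> g l"
  proof (intro ballI)
    fix g l k assume "g \<in> A" "l \<in> A" "k \<in> A"
    thus "Arg (Bform (R g u) (R l u) * Bform (R l u) (R k u) * Bform (R k u) (R g u))
      = \<omega> l k - \<omega> g k + \<omega> g l"
      using coboundary orbit Cart_cline[OF Vpos_Vsp Vpos_Vsp Vpos_Vsp, OF Vpos Vpos Vpos] by simp
  qed
  have hermitian: "\<forall>g\<in>A. \<forall>l\<in>A. Bform (R l u) (R g u) = cnj (Bform (R g u) (R l u))"
    using Bform_swap Vpos Vpos_Vsp by blast
  have nonzero: "\<forall>g\<in>A. \<forall>l\<in>A. Bform (R g u) (R l u) \<noteq> 0"
    using Bform_Vpos_nonzero Vpos by blast
  show ?thesis
    using phases_from_base_point[where F = "\<lambda>g l. Bform (R g u) (R l u)",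
        OF e _ _ hermitian nonzero base triangle]
    by blast
qed

section \<open>The multiplier cocycle\<close>

lemma (in group) cocycle_const_if_indep_right:
  fixes c :: "'a \<Rightarrow> 'a \<Rightarrow> 'c :: idom"
  assumes cocycle: "\<And>a b d. a \<in> carrier G \<Longrightarrow> b \<in> carrier G \<Longrightarrow> d \<in> carrier G \<Longrightarrow>
      c b d * c a (b \<otimes> d) = c a b * c (a \<otimes> b) d"
    and indep_right: "\<And>h g l. h \<in> carrier G \<Longrightarrow> g \<in> carrier G \<Longrightarrow> l \<in> carrier G \<Longrightarrow> c h g = c h l"
    and nonzero: "\<And>a b. a \<in> carrier G \<Longrightarrow> b \<in> carrier G \<Longrightarrow> c a b \<noteq> 0"
    and "a \<in> carrier G" "b \<in> carrier G"
  shows "c a b = c \<one> \<one>"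
proof -
  have "c \<one> \<one> * c a \<one> = c a \<one> * c a \<one>"
    using cocycle[of a \<one> \<one>] \<open>a \<in> carrier G\<close> by simp
  hence "c \<one> \<one> = c a \<one>" using nonzero[of a \<one>] \<open>a \<in> carrier G\<close> by simp
  thus ?thesis using indep_right[of a b \<one>] assms(4,5) by simp
qed

locale projective_lift = group G for G (structure) +
  fixes m :: enat and R :: "'a \<Rightarrow> cvec \<Rightarrow> cvec" and u :: cvec
  assumes unitary: "g \<in> carrier G \<Longrightarrow> Bunitary m (R g)"
    and projective_hom: "g \<in> carrier G \<Longrightarrow> h \<in> carrier G \<Longrightarrow> p \<in> HypSp m \<Longrightarrow>
      R g ` R h ` p = R (g \<otimes> h) ` p"
    and base_Vpos: "u \<in> Vpos m"
    and invariant_phases: "h \<in> carrier G \<Longrightarrow> g \<in> carrier G \<Longrightarrow> l \<in> carrier G \<Longrightarrow>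
      sgn (Bform (R (h \<otimes> g) u) (R (h \<otimes> l) u)) = sgn (Bform (R g u) (R l u))"
begin

lemma orbit_Vpos: "g \<in> carrier G \<Longrightarrow> R g u \<in> Vpos m"
  using Bunitary_Vpos[OF unitary base_Vpos] .

lemma orbit_Vsp: "g \<in> carrier G \<Longrightarrow> R g u \<in> Vsp m"
  using Vpos_Vsp[OF orbit_Vpos] .

definition multiplier :: "'a \<Rightarrow> 'a \<Rightarrow> complex" where
  "multiplier g h = (SOME c. cmod c = 1 \<and> (\<forall>w\<in>Vsp m. R g (R h w) = (\<lambda>i. c * R (g \<otimes> h) w i)))"

lemma multiplier:
  assumes "g \<in> carrier G" "h \<in> carrier G"
  shows "cmod (multiplier g h) = 1"
    and "w \<in> Vsp m \<Longrightarrow> R g (R h w) = (\<lambda>i. multiplier g h * R (g \<otimes> h) w i)"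
proof -
  have "Bunitary m (\<lambda>v. R g (R h v))" by (rule Bunitary_comp[OF unitary unitary, OF assms])
  moreover have "Bunitary m (R (g \<otimes> h))" using assms by (simp add: unitary)
  moreover have "\<forall>p\<in>HypSp m. (\<lambda>v. R g (R h v)) ` p = R (g \<otimes> h) ` p"
    using projective_hom[OF assms] by (simp add: image_image)
  ultimately obtain c where "cmod c = 1" "\<forall>w\<in>Vsp m. R g (R h w) = (\<lambda>i. c * R (g \<otimes> h) w i)"
    by (rule induced_eq_imp_unit_multiple)
  hence "cmod (multiplier g h) = 1 \<and> (\<forall>w\<in>Vsp m. R g (R h w) = (\<lambda>i. multiplier g h * R (g \<otimes> h) w i))"
    unfolding multiplier_def by (intro someI[where P = "\<lambda>c. cmod c = 1
      \<and> (\<forall>w\<in>Vsp m. R g (R h w) = (\<lambda>i. c * R (g \<otimes> h) w i))"]) blast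
  thus "cmod (multiplier g h) = 1" "w \<in> Vsp m \<Longrightarrow> R g (R h w) = (\<lambda>i. multiplier g h * R (g \<otimes> h) w i)"
    by blast+
qed

lemma multiplier_cocycle:
  assumes "a \<in> carrier G" "b \<in> carrier G" "d \<in> carrier G"
  shows "multiplier b d * multiplier a (b \<otimes> d) = multiplier a b * multiplier (a \<otimes> b) d"
proof -
  have "R a (R b (R d u)) = R a (\<lambda>i. multiplier b d * R (b \<otimes> d) u i)"
    using multiplier(2)[OF assms(2,3) Vpos_Vsp[OF base_Vpos]] by simp
  also have "\<dots> = (\<lambda>i. multiplier b d * R a (R (b \<otimes> d) u) i)"
    using Bunitary_scale[OF unitary[OF assms(1)] orbit_Vsp[of "b \<otimes> d"]] assms by simp
  also have "\<dots> = (\<lambda>i. (multiplier b d * multiplier a (b \<otimes> d)) * R (a \<otimes> (b \<otimes> d)) u i)"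
    using assms by (simp add: multiplier(2) Vpos_Vsp[OF base_Vpos] mult.assoc)
  finally have left: "R a (R b (R d u)) = \<dots>" .
  have "R a (R b (R d u)) = (\<lambda>i. multiplier a b * R (a \<otimes> b) (R d u) i)"
    using assms by (simp add: multiplier(2) orbit_Vsp)
  also have "\<dots> = (\<lambda>i. (multiplier a b * multiplier (a \<otimes> b) d) * R (a \<otimes> (b \<otimes> d)) u i)"
    using assms by (simp add: multiplier(2) Vpos_Vsp[OF base_Vpos] mult.assoc m_assoc)
  finally have right: "R a (R b (R d u)) = \<dots>" .
  show ?thesis
    by (rule scale_cancel[OF Vpos_nonzero[OF orbit_Vpos[of "a \<otimes> (b \<otimes> d)"]]])
      (use left right assms in simp_all)
qed

lemma multiplier_indep_right:
  assumes "h \<in> carrier G" "g \<in> carrier G" "l \<in> carrier G"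
  shows "multiplier h g = multiplier h l"
proof -
  define c where "c = multiplier h g * cnj (multiplier h l)"
  have "cmod c = 1" using multiplier(1) assms by (simp add: c_def norm_mult)
  have "Bform (R g u) (R l u) = Bform (R h (R g u)) (R h (R l u))"
    using Bunitary_Bform[OF unitary[OF assms(1)] orbit_Vsp orbit_Vsp] assms(2,3) by simp
  also have "\<dots> = Bform (\<lambda>i. multiplier h g * R (h \<otimes> g) u i) (\<lambda>i. multiplier h l * R (h \<otimes> l) u i)"
    using assms by (simp add: multiplier(2) Vpos_Vsp[OF base_Vpos])
  also have "\<dots> = c * Bform (R (h \<otimes> g) u) (R (h \<otimes> l) u)"
    unfolding c_def using assms by (simp add: Bform_scale[OF orbit_Vsp orbit_Vsp])
  finally have "sgn (Bform (R g u) (R l u)) = c * sgn (Bform (R (h \<otimes> g) u) (R (h \<otimes> l) u))"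
    using \<open>cmod c = 1\<close> by (simp add: sgn_mult norm_eq_1_sgn)
  also have "\<dots> = c * sgn (Bform (R g u) (R l u))"
    using assms by (simp add: invariant_phases)
  finally have "sgn (Bform (R g u) (R l u)) = c * sgn (Bform (R g u) (R l u))" .
  moreover have "sgn (Bform (R g u) (R l u)) \<noteq> 0"
    using Bform_Vpos_nonzero[OF orbit_Vpos orbit_Vpos] assms(2,3) by (simp add: sgn_zero_iff)
  ultimately have "c = 1" by simp
  hence "multiplier h g * (cnj (multiplier h l) * multiplier h l) = multiplier h l"
    by (simp add: c_def mult.assoc[symmetric])
  thus ?thesis
    using norm_eq_1_mult_cnj[OF multiplier(1)[OF assms(1,3)]] by (simp add: mult.commute)
qed

lemma multiplier_const: "g \<in> carrier G \<Longrightarrow> h \<in> carrier G \<Longrightarrow> multiplier g h = multiplier \<one> \<one>"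
proof (rule cocycle_const_if_indep_right[OF multiplier_cocycle multiplier_indep_right])
  show "multiplier a b \<noteq> 0" if "a \<in> carrier G" "b \<in> carrier G" for a b
    using multiplier(1)[OF that] by auto
qed

lemma linear_lift:
  obtains \<rho>' where "\<forall>g\<in>carrier G. Bunitary m (\<rho>' g)"
    "\<forall>g\<in>carrier G. \<forall>h\<in>carrier G. \<forall>v\<in>Vsp m. \<rho>' (g \<otimes> h) v = \<rho>' g (\<rho>' h v)"
    "\<forall>g\<in>carrier G. \<forall>p\<in>HypSp m. \<rho>' g ` p = R g ` p"
proof -
  define c where "c = multiplier \<one> \<one>"
  have "cmod (cnj c) = 1" using multiplier(1) by (simp add: c_def)
  define \<rho>' where "\<rho>' g = (\<lambda>v i. cnj c * R g v i)" for g
  have hom: "\<rho>' g (\<rho>' h v) = \<rho>' (g \<otimes> h) v" if "g \<in> carrier G" "h \<in> carrier G" "v \<in> Vsp m" for g h v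
  proof -
    have "\<rho>' g (\<rho>' h v) = (\<lambda>i. cnj c * (cnj c * R g (R h v) i))"
      using Bunitary_scale[OF unitary[OF that(1)] Bunitary_Vsp[OF unitary[OF that(2)] that(3)]]
      by (simp add: \<rho>'_def)
    also have "\<dots> = (\<lambda>i. cnj c * ((cnj c * c) * R (g \<otimes> h) v i))"
      using multiplier(2)[OF that] multiplier_const[OF that(1,2)] by (simp add: c_def mult.assoc)
    also have "\<dots> = \<rho>' (g \<otimes> h) v"
      using norm_eq_1_mult_cnj[OF \<open>cmod (cnj c) = 1\<close>] by (simp add: \<rho>'_def)
    finally show ?thesis .
  qed
  show ?thesis
  proof (rule that)
    show "\<forall>g\<in>carrier G. Bunitary m (\<rho>' g)"
      using Bunitary_unit_multiple[OF unitary \<open>cmod (cnj c) = 1\<close>] by (simp add: \<rho>'_def)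
    show "\<forall>g\<in>carrier G. \<forall>h\<in>carrier G. \<forall>v\<in>Vsp m. \<rho>' (g \<otimes> h) v = \<rho>' g (\<rho>' h v)"
      using hom by simp
    show "\<forall>g\<in>carrier G. \<forall>p\<in>HypSp m. \<rho>' g ` p = R g ` p"
      using image_unit_multiple_HypSp[OF unitary \<open>cmod (cnj c) = 1\<close>] by (simp add: \<rho>'_def)
  qed
qed

end

lemma projective_liftI:
  assumes "group G" "u \<in> Vpos m"
    and unitary: "\<forall>g\<in>carrier G. Bunitary m (R g)"
    and induces: "\<forall>g\<in>carrier G. \<forall>p\<in>HypSp m. R g ` p = f g p"
    and hom: "\<forall>g\<in>carrier G. \<forall>h\<in>carrier G. \<forall>p\<in>HypSp m. f (g \<otimes>\<^bsub>G\<^esub> h) p = f g (f h p)"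
    and phases: "\<forall>g\<in>carrier G. \<forall>l\<in>carrier G. sgn (Bform (R g u) (R l u)) = cis (\<omega> g l)"
    and invariant: "\<forall>h\<in>carrier G. \<forall>g\<in>carrier G. \<forall>l\<in>carrier G. \<omega> (h \<otimes>\<^bsub>G\<^esub> g) (h \<otimes>\<^bsub>G\<^esub> l) = \<omega> g l"
  shows "projective_lift G m R u"
proof -
  interpret group G by (rule assms(1))
  show ?thesis
  proof
    show "Bunitary m (R g)" if "g \<in> carrier G" for g
      using unitary that by blast
    show "R g ` R h ` p = R (g \<otimes>\<^bsub>G\<^esub> h) ` p" if "g \<in> carrier G" "h \<in> carrier G" "p \<in> HypSp m" for g h p
    proof -
      have "f h p \<in> HypSp m"
        using Bunitary_image_HypSp[OF _ that(3)] unitary induces that(2,3) by metis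
      thus ?thesis using that induces hom by simp
    qed
    show "u \<in> Vpos m" by (rule assms(2))
    show "sgn (Bform (R (h \<otimes>\<^bsub>G\<^esub> g) u) (R (h \<otimes>\<^bsub>G\<^esub> l) u)) = sgn (Bform (R g u) (R l u))"
      if "h \<in> carrier G" "g \<in> carrier G" "l \<in> carrier G" for h g l
      using that phases invariant by simp
  qed
qed

theorem mainTheorem5:
  fixes G :: "('g, 'b) monoid_scheme" and T :: "'g topology" and m :: enat
    and \<rho> :: "'g \<Rightarrow> cvec set \<Rightarrow> cvec set" and x :: "cvec set"
    and \<omega> :: "'g \<Rightarrow> 'g \<Rightarrow> real"
  assumes "topological_group G T"
    and "representation G T m \<rho>"
    and "x \<in> HypSp m"
    and "total m ((\<lambda>g. \<rho> g x) ` carrier G)"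
    and "\<forall>g\<in>carrier G. \<forall>l\<in>carrier G. \<omega> l g = - \<omega> g l"
    and "\<forall>h\<in>carrier G. \<forall>g\<in>carrier G. \<forall>l\<in>carrier G.
           \<omega> (h \<otimes>\<^bsub>G\<^esub> g) (h \<otimes>\<^bsub>G\<^esub> l) = \<omega> g l"
    and "\<forall>g\<in>carrier G. \<forall>l\<in>carrier G. \<forall>k\<in>carrier G.
           \<omega> l k - \<omega> g k + \<omega> g l = Cart (\<rho> g x) (\<rho> l x) (\<rho> k x)"
  shows "\<exists>\<rho>'. (\<forall>g\<in>carrier G. Bunitary m (\<rho>' g))
     \<and> (\<forall>g\<in>carrier G. \<forall>h\<in>carrier G. \<forall>v\<in>Vsp m. \<rho>' (g \<otimes>\<^bsub>G\<^esub> h) v = \<rho>' g (\<rho>' h v))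
     \<and> (\<forall>g\<in>carrier G. \<forall>p\<in>HypSp m. \<rho> g p = induced (\<rho>' g) p)"
proof -
  interpret group G using assms(1) by (simp add: topological_group_def)
  have PU: "\<forall>g\<in>carrier G. PU m (\<rho> g)"
    and hom: "\<forall>g\<in>carrier G. \<forall>h\<in>carrier G. \<forall>p\<in>HypSp m. \<rho> (g \<otimes>\<^bsub>G\<^esub> h) p = \<rho> g (\<rho> h p)"
    using assms(2) by (simp_all add: representation_def)
  obtain u where u: "u \<in> Vpos m" "x = cline u"
    using assms(3) by (auto simp: HypSp_eq_image_Vpos)
  have "\<omega> \<one>\<^bsub>G\<^esub> \<one>\<^bsub>G\<^esub> = - \<omega> \<one>\<^bsub>G\<^esub> \<one>\<^bsub>G\<^esub>" using assms(5) by blast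
  hence "\<omega> \<one>\<^bsub>G\<^esub> \<one>\<^bsub>G\<^esub> = 0" by simp
  obtain R where unitary: "\<forall>g\<in>carrier G. Bunitary m (R g)"
    and induces: "\<forall>g\<in>carrier G. \<forall>p\<in>HypSp m. R g ` p = \<rho> g p"
    and base: "\<forall>g\<in>carrier G. sgn (Bform (R g u) (R \<one>\<^bsub>G\<^esub> u)) = cis (\<omega> g \<one>\<^bsub>G\<^esub>)"
    by (rule lifts_with_base_phases[where \<omega> = \<omega>, OF one_closed u(1) PU \<open>\<omega> \<one>\<^bsub>G\<^esub> \<one>\<^bsub>G\<^esub> = 0\<close>])
  have phases: "\<forall>g\<in>carrier G. \<forall>l\<in>carrier G. sgn (Bform (R g u) (R l u)) = cis (\<omega> g l)"
    by (rule coboundary_phases[OF one_closed u(1) unitary induces base assms(7)[unfolded u(2)]])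
  interpret projective_lift G m R u
    by (rule projective_liftI[OF is_group u(1) unitary induces hom phases assms(6)])
  obtain \<rho>' where lift: "\<forall>g\<in>carrier G. Bunitary m (\<rho>' g)"
    "\<forall>g\<in>carrier G. \<forall>h\<in>carrier G. \<forall>v\<in>Vsp m. \<rho>' (g \<otimes>\<^bsub>G\<^esub> h) v = \<rho>' g (\<rho>' h v)"
    "\<forall>g\<in>carrier G. \<forall>p\<in>HypSp m. \<rho>' g ` p = R g ` p"
    by (rule linear_lift)
  show ?thesis
    using lift induces unfolding induced_def by (intro exI[of _ \<rho>']) auto
qed

end
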